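(* In the shallow setting of the context, assume there exists $M>0$ such that $$\max_{h=1,\ldots,n_2}\Big|\sigma^{(s_h)}\Big(b+\sum_{r=1}^{n_0}w_rx_{\alpha,r}\Big)w_1^{s_h}\Big|\le M\Big(1+\Big|b+\sum_{r=1}^{n_0}w_rx_{\alpha,r}\Big|\Big)$$ for every $\alpha\in A$ and every $b,w_1,\ldots,w_{n_0}\in\mathbb{R}$. Then $\Upsilon(\cdot;\underline{x})$ is finite in a neighborhood of the origin of $\mathbb{R}^{|A|\times n_2}$.
   Context: Fix integers $n_0,n_2\ge1$, constants $C_b\ge0$, $C_W>0$, a function $\sigma:\mathbb{R}\to\mathbb{R}$, a finite set $A$ and inputs $x_\alpha=(x_{\alpha,1},\ldots,x_{\alpha,n_0})\in\mathbb{R}^{n_0}$, $\alpha\in A$ ($\underline{x}=\{x_\alpha\}$). Fix $s_1,\ldots,s_{n_2}\in\{0,1\}$; unless all $s_h=0$, $\sigma$ is assumed almost everywhere differentiable with a.e. derivative $\sigma^{(1)}=\sigma'$; $\sigma^{(0)}=\sigma$. Let $b^{(1)}_1$ be centered Normal with variance $C_b$, $W^{(1)}_{1r}$ ($r=1,\ldots,n_0$) centered Normal with variance $C_W/n_0$, and $\widehat W^{(2)}_{h1}$ ($h=1,\ldots,n_2$) standard Normal, all independent. Set $F_{h1}(x):=\sqrt{C_W}\widehat W^{(2)}_{h1}\sigma^{(s_h)}(b^{(1)}_1+\sum_{r=1}^{n_0}W^{(1)}_{1r}x_r)(W^{(1)}_{11})^{s_h}$ and, for $\theta\in\mathbb{R}^{|A|\times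 n_2}$, $\Upsilon(\theta;\underline{x}):=\log\mathbb{E}[\exp(\sum_{\alpha\in A}\sum_{h=1}^{n_2}\theta_{\alpha h}F_{h1}(x_\alpha))]$, which equals $\log\mathbb{E}[\exp(\frac{C_W}{2}\sum_{h=1}^{n_2}(\sum_{\alpha\in A}\theta_{\alpha h}\sigma^{(s_h)}(b^{(1)}_1+\sum_rW^{(1)}_{1r}x_{\alpha,r})(W^{(1)}_{11})^{s_h})^2)]$. *)

theory Defs
  imports "HOL-Probability.Probability"
begin

definition gauss :: "real measure" where
  "gauss = density lborel (\<lambda>t. ennreal (std_normal_density t))"

text \<open>Sample space of the shallow network: a point (z, u, v) encodes
  b^(1)_1 = sqrt C_b * z, W^(1)_{1r} = sqrt (C_W / n0) * u r (r = 1..n0),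
  hat W^(2)_{h1} = v h (h = 1..n2); all coordinates i.i.d. standard Gaussian.\<close>
definition shallow_space :: "nat \<Rightarrow> nat \<Rightarrow> (real \<times> (nat \<Rightarrow> real) \<times> (nat \<Rightarrow> real)) measure" where
  "shallow_space n0 n2 = gauss \<Otimes>\<^sub>M ((PiM {1..n0} (\<lambda>_. gauss)) \<Otimes>\<^sub>M (PiM {1..n2} (\<lambda>_. gauss)))"

definition sigma_s :: "(real \<Rightarrow> real) \<Rightarrow> (real \<Rightarrow> real) \<Rightarrow> nat \<Rightarrow> real \<Rightarrow> real" where
  "sigma_s \<sigma> \<sigma>' k t = (if k = 0 then \<sigma> t else \<sigma>' t)"

definition shallow_F ::
  "nat \<Rightarrow> real \<Rightarrow> real \<Rightarrow> (real \<Rightarrow> real) \<Rightarrow> (real \<Rightarrow> real) \<Rightarrow> (nat \<Rightarrow> nat)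
   \<Rightarrow> nat \<Rightarrow> (nat \<Rightarrow> real) \<Rightarrow> real \<times> (nat \<Rightarrow> real) \<times> (nat \<Rightarrow> real) \<Rightarrow> real" where
  "shallow_F n0 Cb CW \<sigma> \<sigma>' s h x \<omega> =
     (case \<omega> of (z, u, v) \<Rightarrow>
       (let b = sqrt Cb * z; W = (\<lambda>r. sqrt (CW / real n0) * u r) in
        sqrt CW * v h * sigma_s \<sigma> \<sigma>' (s h) (b + (\<Sum>r=1..n0. W r * x r)) * (W 1) ^ (s h)))"

end

theory Submission
  imports Defs
begin

(* The preactivation
   L_alpha = sqrt C_b z + sum_r sqrt (C_W / n0) u_r x_(alpha,r) and the weight W_11 are linear in
   (z, u), so by the growth hypothesis each summand theta_(alpha h) F_h1(x_alpha) of the exponent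
   is at most |theta_(alpha h)| times a constant times (1 + |z| + |u|_1 + |v|_1)^2, hence at most
   eps C (1 + z^2 + |u|^2 + |v|^2) by Cauchy-Schwarz.  Once eps C <= 1/4 the integrand is dominated
   by e^(1/4) times the product of e^(t^2/4) over all coordinates t, and each factor has Gaussian
   integral sqrt 2. *)

lemma prob_space_gauss: "prob_space gauss"
  unfolding gauss_def by (rule prob_space_normal_density) simp

lemma nn_integral_gauss_exp_quarter_sq:
  "(\<integral>\<^sup>+t. ennreal (exp (t\<^sup>2 / 4)) \<partial>gauss) = ennreal (sqrt 2)"
proof -
  have density_eq: "std_normal_density t * exp (t\<^sup>2 / 4) = sqrt 2 * normal_density 0 (sqrt 2) t"
    for t :: real
  proof -
    have "exp (- t\<^sup>2 / 2) * exp (t\<^sup>2 / 4) = exp (- t\<^sup>2 / (2 * (sqrt 2)\<^sup>2))"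
      by (simp add: exp_add[symmetric])
    moreover have "sqrt (2 * pi * (sqrt 2)\<^sup>2) = sqrt 2 * sqrt (2 * pi)"
      by (simp add: real_sqrt_mult[symmetric])
    ultimately show ?thesis
      unfolding std_normal_density_def normal_density_def by (simp add: field_simps)
  qed
  interpret N: prob_space "density lborel (\<lambda>t. ennreal (normal_density 0 (sqrt 2) t))"
    by (rule prob_space_normal_density) simp
  have "(\<integral>\<^sup>+t. ennreal (exp (t\<^sup>2 / 4)) \<partial>gauss)
      = (\<integral>\<^sup>+t. ennreal (sqrt 2) * ennreal (normal_density 0 (sqrt 2) t) \<partial>lborel)"
    unfolding gauss_def
    by (subst nn_integral_density) (auto simp: density_eq ennreal_mult[symmetric])
  also have "\<dots> = ennreal (sqrt 2) * (\<integral>\<^sup>+t. ennreal (normal_density 0 (sqrt 2) t) \<partial>lborel)"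
    by (rule nn_integral_cmult) auto
  also have "(\<integral>\<^sup>+t. ennreal (normal_density 0 (sqrt 2) t) \<partial>lborel) = 1"
    using N.emeasure_space_1 by (simp add: emeasure_density)
  finally show ?thesis by simp
qed

lemma nn_integral_PiM_gauss_exp_quarter_sq:
  assumes "finite I"
  shows "(\<integral>\<^sup>+u. ennreal (exp ((\<Sum>i\<in>I. (u i)\<^sup>2) / 4)) \<partial>PiM I (\<lambda>_. gauss))
    = ennreal (sqrt 2) ^ card I"
proof -
  interpret product_prob_space "\<lambda>_. gauss"
    by (simp add: product_prob_space_def product_prob_space_axioms_def product_sigma_finite_def
        prob_space_gauss prob_space_imp_sigma_finite)
  have "(\<integral>\<^sup>+u. ennreal (exp ((\<Sum>i\<in>I. (u i)\<^sup>2) / 4)) \<partial>PiM I (\<lambda>_. gauss))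
      = (\<integral>\<^sup>+u. (\<Prod>i\<in>I. ennreal (exp ((u i)\<^sup>2 / 4))) \<partial>PiM I (\<lambda>_. gauss))"
    using assms by (simp add: sum_divide_distrib exp_sum prod_ennreal)
  also have "\<dots> = (\<Prod>i\<in>I. \<integral>\<^sup>+t. ennreal (exp (t\<^sup>2 / 4)) \<partial>gauss)"
    using assms by (rule product_nn_integral_prod) (simp add: gauss_def)
  finally show ?thesis
    by (simp add: nn_integral_gauss_exp_quarter_sq)
qed

lemma nn_integral_pair_measure_mult:
  assumes "sigma_finite_measure M1" "sigma_finite_measure M2"
    and [measurable]: "f \<in> borel_measurable M1" "g \<in> borel_measurable M2"
  shows "(\<integral>\<^sup>+p. f (fst p) * g (snd p) \<partial>(M1 \<Otimes>\<^sub>M M2)) = integral\<^sup>N M1 f * integral\<^sup>N M2 g"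
proof -
  interpret pair_sigma_finite M1 M2
    using assms by (simp add: pair_sigma_finite_def)
  have "(\<integral>\<^sup>+p. f (fst p) * g (snd p) \<partial>(M1 \<Otimes>\<^sub>M M2)) = (\<integral>\<^sup>+x. \<integral>\<^sup>+y. f x * g y \<partial>M2 \<partial>M1)"
    by (subst M2.nn_integral_fst[symmetric]) auto
  also have "\<dots> = integral\<^sup>N M1 f * integral\<^sup>N M2 g"
    by (simp add: nn_integral_cmult nn_integral_multc)
  finally show ?thesis .
qed

definition shallow_sqnorm :: "nat \<Rightarrow> nat \<Rightarrow> real \<times> (nat \<Rightarrow> real) \<times> (nat \<Rightarrow> real) \<Rightarrow> real" where
  "shallow_sqnorm n0 n2 \<omega> =
     (case \<omega> of (z, u, v) \<Rightarrow> z\<^sup>2 + (\<Sum>r=1..n0. (u r)\<^sup>2) + (\<Sum>h=1..n2. (v h)\<^sup>2))"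

lemma sets_shallow_space:
  "sets (shallow_space n0 n2)
    = sets (borel \<Otimes>\<^sub>M (PiM {1..n0} (\<lambda>_. borel) \<Otimes>\<^sub>M PiM {1..n2} (\<lambda>_. borel)))"
  unfolding shallow_space_def
  by (intro sets_pair_measure_cong sets_PiM_cong) (simp_all add: gauss_def)

lemma borel_measurable_shallow_sqnorm:
  "shallow_sqnorm n0 n2 \<in> borel_measurable (shallow_space n0 n2)"
proof -
  have "shallow_sqnorm n0 n2
      \<in> borel_measurable (borel \<Otimes>\<^sub>M (PiM {1..n0} (\<lambda>_. borel) \<Otimes>\<^sub>M PiM {1..n2} (\<lambda>_. borel)))"
    unfolding shallow_sqnorm_def case_prod_beta by measurable
  then show ?thesis
    using measurable_cong_sets[OF sets_shallow_space refl] by blast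
qed

lemma nn_integral_shallow_space_exp_quarter_sqnorm:
  "(\<integral>\<^sup>+\<omega>. ennreal (exp (shallow_sqnorm n0 n2 \<omega> / 4)) \<partial>shallow_space n0 n2)
    = ennreal (sqrt 2) ^ (1 + n0 + n2)"
proof -
  define f where "f t = ennreal (exp (t\<^sup>2 / 4))" for t :: real
  define g where "g n u = ennreal (exp ((\<Sum>i=1..n. (u i)\<^sup>2) / 4))" for n and u :: "nat \<Rightarrow> real"
  define P where "P n = PiM {1..n} (\<lambda>_. gauss)" for n :: nat
  have gauss_borel: "sets gauss = sets borel"
    by (simp add: gauss_def)
  have f_measurable: "f \<in> borel_measurable gauss"
    unfolding f_def by (simp add: measurable_cong_sets[OF gauss_borel refl])
  have g_measurable: "g n \<in> borel_measurable (P n)" for n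
  proof -
    have "sets (P n) = sets (PiM {1..n} (\<lambda>_. borel))"
      unfolding P_def by (intro sets_PiM_cong) (simp_all add: gauss_borel)
    moreover have "g n \<in> borel_measurable (PiM {1..n} (\<lambda>_. borel))"
      unfolding g_def by measurable
    ultimately show ?thesis
      using measurable_cong_sets[OF _ refl, of "P n" _ borel] by blast
  qed
  have sigma_finite_P: "sigma_finite_measure (P n)" for n
    unfolding P_def by (intro prob_space_imp_sigma_finite prob_space_PiM prob_space_gauss)
  have sigma_finite_PP: "sigma_finite_measure (P n0 \<Otimes>\<^sub>M P n2)"
    unfolding P_def by (intro prob_space_imp_sigma_finite prob_space_pair prob_space_PiM prob_space_gauss)
  have integral_g: "integral\<^sup>N (P n) (g n) = ennreal (sqrt 2) ^ n" for n
    unfolding P_def g_def[abs_def] by (simp add: nn_integral_PiM_gauss_exp_quarter_sq)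
  have "(\<integral>\<^sup>+\<omega>. ennreal (exp (shallow_sqnorm n0 n2 \<omega> / 4)) \<partial>shallow_space n0 n2)
      = (\<integral>\<^sup>+\<omega>. f (fst \<omega>) * (g n0 (fst (snd \<omega>)) * g n2 (snd (snd \<omega>))) \<partial>shallow_space n0 n2)"
    by (simp add: f_def g_def shallow_sqnorm_def case_prod_beta add_divide_distrib exp_add
        ennreal_mult mult.assoc)
  also have "\<dots> = integral\<^sup>N gauss f * (\<integral>\<^sup>+p. g n0 (fst p) * g n2 (snd p) \<partial>(P n0 \<Otimes>\<^sub>M P n2))"
    unfolding shallow_space_def P_def[symmetric]
  proof (rule nn_integral_pair_measure_mult)
    show "(\<lambda>p. g n0 (fst p) * g n2 (snd p)) \<in> borel_measurable (P n0 \<Otimes>\<^sub>M P n2)"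
      using g_measurable by measurable
  qed (use prob_space_gauss prob_space_imp_sigma_finite sigma_finite_PP f_measurable in auto)
  also have "(\<integral>\<^sup>+p. g n0 (fst p) * g n2 (snd p) \<partial>(P n0 \<Otimes>\<^sub>M P n2))
      = integral\<^sup>N (P n0) (g n0) * integral\<^sup>N (P n2) (g n2)"
    by (rule nn_integral_pair_measure_mult) (use sigma_finite_P g_measurable in auto)
  finally show ?thesis
    by (simp add: integral_g f_def nn_integral_gauss_exp_quarter_sq power_add)
qed

lemma power2_sum4_le: "(a + b + c + d)\<^sup>2 \<le> 4 * (a\<^sup>2 + b\<^sup>2 + c\<^sup>2 + d\<^sup>2)" for a b c d :: real
proof -
  have "0 \<le> (a-b)\<^sup>2 + (a-c)\<^sup>2 + (a-d)\<^sup>2 + (b-c)\<^sup>2 + (b-d)\<^sup>2 + (c-d)\<^sup>2"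
    by simp
  then show ?thesis
    by (simp add: power2_eq_square algebra_simps)
qed

lemma power2_l1_le_card_mult_sqnorm:
  fixes z :: real and u v :: "'i \<Rightarrow> real"
  shows "(1 + \<bar>z\<bar> + (\<Sum>i\<in>I. \<bar>u i\<bar>) + (\<Sum>j\<in>J. \<bar>v j\<bar>))\<^sup>2
    \<le> 4 * (1 + real (card I) + real (card J)) * (1 + z\<^sup>2 + (\<Sum>i\<in>I. (u i)\<^sup>2) + (\<Sum>j\<in>J. (v j)\<^sup>2))"
proof -
  define S T where "S = (\<Sum>i\<in>I. (u i)\<^sup>2)" and "T = (\<Sum>j\<in>J. (v j)\<^sup>2)"
  define k where "k = 1 + real (card I) + real (card J)"
  have "S \<ge> 0" "T \<ge> 0" "k \<ge> 1"
    by (simp_all add: S_def T_def k_def sum_nonneg)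
  have "(1 + \<bar>z\<bar> + (\<Sum>i\<in>I. \<bar>u i\<bar>) + (\<Sum>j\<in>J. \<bar>v j\<bar>))\<^sup>2
      \<le> 4 * (1\<^sup>2 + \<bar>z\<bar>\<^sup>2 + (\<Sum>i\<in>I. \<bar>u i\<bar>)\<^sup>2 + (\<Sum>j\<in>J. \<bar>v j\<bar>)\<^sup>2)"
    by (rule power2_sum4_le)
  also have "\<dots> \<le> 4 * (1 + z\<^sup>2 + card I * S + card J * T)"
    using sum_squared_le_sum_of_squares[of "\<lambda>i. \<bar>u i\<bar>" I]
      sum_squared_le_sum_of_squares[of "\<lambda>j. \<bar>v j\<bar>" J]
    by (simp add: S_def T_def mult.commute)
  also have "\<dots> \<le> 4 * (k * (1 + z\<^sup>2 + S + T))"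
  proof -
    have "1 + z\<^sup>2 \<le> k * (1 + z\<^sup>2)"
      using mult_right_mono[OF \<open>k \<ge> 1\<close>, of "1 + z\<^sup>2"] by simp
    moreover have "card I * S \<le> k * S" "card J * T \<le> k * T"
      using \<open>S \<ge> 0\<close> \<open>T \<ge> 0\<close> by (simp_all add: k_def mult_right_mono)
    ultimately show ?thesis
      by (simp add: algebra_simps)
  qed
  finally show ?thesis
    by (simp only: S_def T_def k_def mult.assoc)
qed

definition shallow_growth_const :: "nat \<Rightarrow> real \<Rightarrow> real \<Rightarrow> real \<Rightarrow> (nat \<Rightarrow> real) \<Rightarrow> real" where
  "shallow_growth_const n0 Cb CW M xa =
     sqrt CW * M * (1 + sqrt Cb + sqrt (CW / n0) * (\<Sum>r=1..n0. \<bar>xa r\<bar>))"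

lemma abs_shallow_F_le:
  fixes xa :: "nat \<Rightarrow> real"
  assumes "Cb \<ge> 0" "CW \<ge> 0" "M \<ge> 0" "h \<in> {1..n2}"
    and growth: "\<forall>b (w :: nat \<Rightarrow> real).
      \<bar>sigma_s \<sigma> \<sigma>' (s h) (b + (\<Sum>r=1..n0. w r * xa r)) * (w 1) ^ (s h)\<bar>
        \<le> M * (1 + \<bar>b + (\<Sum>r=1..n0. w r * xa r)\<bar>)"
  shows "\<bar>shallow_F n0 Cb CW \<sigma> \<sigma>' s h xa (z, u, v)\<bar>
    \<le> shallow_growth_const n0 Cb CW M xa
       * (1 + \<bar>z\<bar> + (\<Sum>r=1..n0. \<bar>u r\<bar>) + (\<Sum>h=1..n2. \<bar>v h\<bar>))\<^sup>2"
proof -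
  define c where "c = sqrt (CW / n0)"
  define L where "L = sqrt Cb * z + (\<Sum>r=1..n0. c * u r * xa r)"
  define X where "X = (\<Sum>r=1..n0. \<bar>xa r\<bar>)"
  define U where "U = (\<Sum>r=1..n0. \<bar>u r\<bar>)"
  define N where "N = 1 + \<bar>z\<bar> + U + (\<Sum>h=1..n2. \<bar>v h\<bar>)"
  have c_nonneg: "c \<ge> 0"
    using assms(2) by (simp add: c_def)
  have X_nonneg: "X \<ge> 0" and U_nonneg: "U \<ge> 0" and V_nonneg: "(\<Sum>h=1..n2. \<bar>v h\<bar>) \<ge> 0"
    by (simp_all add: X_def U_def sum_nonneg)
  have N_ge_1: "N \<ge> 1"
    using U_nonneg V_nonneg by (simp add: N_def)
  have "\<bar>v h\<bar> \<le> (\<Sum>h=1..n2. \<bar>v h\<bar>)"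
    by (rule member_le_sum) (use assms(4) in auto)
  then have v_le_N: "\<bar>v h\<bar> \<le> N"
    using U_nonneg abs_ge_zero[of z] unfolding N_def by linarith
  have "(\<Sum>r=1..n0. \<bar>u r\<bar> * \<bar>xa r\<bar>) \<le> (\<Sum>r=1..n0. \<bar>u r\<bar> * X)"
    by (intro sum_mono mult_left_mono) (auto simp: X_def intro: member_le_sum)
  also have "\<dots> = U * X"
    by (simp add: U_def sum_distrib_right)
  finally have u_xa: "(\<Sum>r=1..n0. \<bar>u r\<bar> * \<bar>xa r\<bar>) \<le> U * X" .
  have "\<bar>L\<bar> \<le> sqrt Cb * \<bar>z\<bar> + c * (\<Sum>r=1..n0. \<bar>u r\<bar> * \<bar>xa r\<bar>)"
    unfolding L_def using assms(1) c_nonneg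
    by (intro order.trans[OF abs_triangle_ineq] add_mono order.trans[OF sum_abs])
      (simp_all add: abs_mult sum_distrib_left mult.assoc)
  also have "\<dots> \<le> sqrt Cb * N + c * (X * N)"
  proof -
    have "U \<le> N" "\<bar>z\<bar> \<le> N"
      using U_nonneg V_nonneg by (simp_all add: N_def)
    then have "(\<Sum>r=1..n0. \<bar>u r\<bar> * \<bar>xa r\<bar>) \<le> X * N"
      using order.trans[OF u_xa mult_right_mono[OF _ X_nonneg]] by (simp add: mult.commute)
    then show ?thesis
      using \<open>\<bar>z\<bar> \<le> N\<close> assms(1) c_nonneg by (intro add_mono mult_left_mono) simp_all
  qed
  finally have "1 + \<bar>L\<bar> \<le> (1 + sqrt Cb + c * X) * N"
    using N_ge_1 by (simp add: algebra_simps)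
  then have "\<bar>sigma_s \<sigma> \<sigma>' (s h) L * (c * u 1) ^ s h\<bar> \<le> M * ((1 + sqrt Cb + c * X) * N)"
    using growth[rule_format, of "sqrt Cb * z" "\<lambda>r. c * u r"] assms(3)
    by (auto simp: L_def mult.assoc intro: order.trans mult_left_mono)
  with v_le_N have G_bound: "\<bar>v h\<bar> * \<bar>sigma_s \<sigma> \<sigma>' (s h) L * (c * u 1) ^ s h\<bar>
      \<le> N * (M * ((1 + sqrt Cb + c * X) * N))"
    by (rule mult_mono') simp_all
  have "\<bar>shallow_F n0 Cb CW \<sigma> \<sigma>' s h xa (z, u, v)\<bar>
      = sqrt CW * (\<bar>v h\<bar> * \<bar>sigma_s \<sigma> \<sigma>' (s h) L * (c * u 1) ^ s h\<bar>)"
    using assms(2) by (simp add: shallow_F_def Let_def L_def c_def abs_mult mult_ac)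
  also have "\<dots> \<le> sqrt CW * (N * (M * ((1 + sqrt Cb + c * X) * N)))"
    using G_bound by (rule mult_left_mono) (simp add: assms(2))
  also have "\<dots> = shallow_growth_const n0 Cb CW M xa * N\<^sup>2"
    by (simp add: shallow_growth_const_def c_def X_def power2_eq_square mult_ac)
  finally show ?thesis
    by (simp only: N_def U_def)
qed

lemma shallow_exponent_le:
  fixes x :: "'a \<Rightarrow> nat \<Rightarrow> real" and \<theta> :: "'a \<Rightarrow> nat \<Rightarrow> real"
  assumes "Cb \<ge> 0" "CW \<ge> 0" "M \<ge> 0"
    and growth: "\<forall>\<alpha>\<in>A. \<forall>b (w :: nat \<Rightarrow> real). \<forall>h\<in>{1..n2}.
           \<bar>sigma_s \<sigma> \<sigma>' (s h) (b + (\<Sum>r=1..n0. w r * x \<alpha> r)) * (w 1) ^ (s h)\<bar>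
             \<le> M * (1 + \<bar>b + (\<Sum>r=1..n0. w r * x \<alpha> r)\<bar>)"
    and \<theta>_le: "\<forall>\<alpha>\<in>A. \<forall>h\<in>{1..n2}. \<bar>\<theta> \<alpha> h\<bar> \<le> \<epsilon>"
  shows "(\<Sum>\<alpha>\<in>A. \<Sum>h=1..n2. \<theta> \<alpha> h * shallow_F n0 Cb CW \<sigma> \<sigma>' s h (x \<alpha>) \<omega>)
    \<le> \<epsilon> * (4 * (1 + real n0 + real n2) * real n2 * (\<Sum>\<alpha>\<in>A. shallow_growth_const n0 Cb CW M (x \<alpha>)))
       * (1 + shallow_sqnorm n0 n2 \<omega>)"
proof -
  obtain z u v where \<omega>: "\<omega> = (z, u, v)"
    by (cases \<omega>) auto
  define Q where "Q = 4 * (1 + real n0 + real n2) * (1 + shallow_sqnorm n0 n2 \<omega>)"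
  have term_le: "\<theta> \<alpha> h * shallow_F n0 Cb CW \<sigma> \<sigma>' s h (x \<alpha>) \<omega>
      \<le> \<epsilon> * (shallow_growth_const n0 Cb CW M (x \<alpha>) * Q)"
    if "\<alpha> \<in> A" "h \<in> {1..n2}" for \<alpha> h
  proof -
    have "\<bar>shallow_F n0 Cb CW \<sigma> \<sigma>' s h (x \<alpha>) \<omega>\<bar>
        \<le> shallow_growth_const n0 Cb CW M (x \<alpha>)
           * (1 + \<bar>z\<bar> + (\<Sum>r=1..n0. \<bar>u r\<bar>) + (\<Sum>h=1..n2. \<bar>v h\<bar>))\<^sup>2"
      unfolding \<omega> using assms(1-3) growth that by (intro abs_shallow_F_le) simp_all
    also have "\<dots> \<le> shallow_growth_const n0 Cb CW M (x \<alpha>) * Q"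
    proof (rule mult_left_mono)
      show "(1 + \<bar>z\<bar> + (\<Sum>r=1..n0. \<bar>u r\<bar>) + (\<Sum>h=1..n2. \<bar>v h\<bar>))\<^sup>2 \<le> Q"
        using power2_l1_le_card_mult_sqnorm[where z = z and u = u and v = v
            and I = "{1..n0}" and J = "{1..n2}"]
        by (simp only: Q_def shallow_sqnorm_def \<omega> prod.case card_atLeastAtMost diff_Suc_1 add.assoc)
      show "0 \<le> shallow_growth_const n0 Cb CW M (x \<alpha>)"
        using assms(1-3) by (simp add: shallow_growth_const_def sum_nonneg)
    qed
    finally have "\<bar>shallow_F n0 Cb CW \<sigma> \<sigma>' s h (x \<alpha>) \<omega>\<bar> \<le> shallow_growth_const n0 Cb CW M (x \<alpha>) * Q" .
    moreover have "\<bar>\<theta> \<alpha> h\<bar> \<le> \<epsilon>"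
      using \<theta>_le that by blast
    ultimately have "\<bar>\<theta> \<alpha> h\<bar> * \<bar>shallow_F n0 Cb CW \<sigma> \<sigma>' s h (x \<alpha>) \<omega>\<bar>
        \<le> \<epsilon> * (shallow_growth_const n0 Cb CW M (x \<alpha>) * Q)"
      by (intro mult_mono) auto
    then show ?thesis
      by (metis abs_ge_self abs_mult order.trans)
  qed
  have "(\<Sum>\<alpha>\<in>A. \<Sum>h=1..n2. \<theta> \<alpha> h * shallow_F n0 Cb CW \<sigma> \<sigma>' s h (x \<alpha>) \<omega>)
      \<le> (\<Sum>\<alpha>\<in>A. \<Sum>h=1..n2. \<epsilon> * (shallow_growth_const n0 Cb CW M (x \<alpha>) * Q))"
    by (intro sum_mono term_le) auto
  also have "\<dots> = \<epsilon> * (4 * (1 + real n0 + real n2) * real n2 * (\<Sum>\<alpha>\<in>A. shallow_growth_const n0 Cb CW M (x \<alpha>)))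
       * (1 + shallow_sqnorm n0 n2 \<omega>)"
    by (simp add: Q_def sum_distrib_left sum_distrib_right mult_ac)
  finally show ?thesis .
qed

lemma shallow_exponent_le_quarter:
  fixes x :: "'a \<Rightarrow> nat \<Rightarrow> real"
  assumes "Cb \<ge> 0" "CW \<ge> 0" "M \<ge> 0"
    and growth: "\<forall>\<alpha>\<in>A. \<forall>b (w :: nat \<Rightarrow> real). \<forall>h\<in>{1..n2}.
           \<bar>sigma_s \<sigma> \<sigma>' (s h) (b + (\<Sum>r=1..n0. w r * x \<alpha> r)) * (w 1) ^ (s h)\<bar>
             \<le> M * (1 + \<bar>b + (\<Sum>r=1..n0. w r * x \<alpha> r)\<bar>)"
  obtains \<epsilon> where "\<epsilon> > 0"
    and "\<And>\<theta> \<omega>. \<forall>\<alpha>\<in>A. \<forall>h\<in>{1..n2}. \<bar>\<theta> \<alpha> h\<bar> < \<epsilon> \<Longrightarrow>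
      (\<Sum>\<alpha>\<in>A. \<Sum>h=1..n2. \<theta> \<alpha> h * shallow_F n0 Cb CW \<sigma> \<sigma>' s h (x \<alpha>) \<omega>)
        \<le> (1 + shallow_sqnorm n0 n2 \<omega>) / 4"
proof -
  define C where "C = 4 * (1 + real n0 + real n2) * real n2
    * (\<Sum>\<alpha>\<in>A. shallow_growth_const n0 Cb CW M (x \<alpha>))"
  define \<epsilon> where "\<epsilon> = 1 / (4 * (C + 1))"
  have "C \<ge> 0"
    using assms(1-3) by (simp add: C_def shallow_growth_const_def sum_nonneg)
  then have "\<epsilon> > 0" and \<epsilon>C_le: "\<epsilon> * C \<le> 1 / 4"
    by (simp_all add: \<epsilon>_def field_simps)
  moreover have "(\<Sum>\<alpha>\<in>A. \<Sum>h=1..n2. \<theta> \<alpha> h * shallow_F n0 Cb CW \<sigma> \<sigma>' s h (x \<alpha>) \<omega>)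
      \<le> (1 + shallow_sqnorm n0 n2 \<omega>) / 4"
    if "\<forall>\<alpha>\<in>A. \<forall>h\<in>{1..n2}. \<bar>\<theta> \<alpha> h\<bar> < \<epsilon>" for \<theta> \<omega>
  proof -
    have "(\<Sum>\<alpha>\<in>A. \<Sum>h=1..n2. \<theta> \<alpha> h * shallow_F n0 Cb CW \<sigma> \<sigma>' s h (x \<alpha>) \<omega>)
        \<le> \<epsilon> * C * (1 + shallow_sqnorm n0 n2 \<omega>)"
      unfolding C_def using assms that by (intro shallow_exponent_le) (auto simp: less_imp_le)
    also have "\<dots> \<le> 1 / 4 * (1 + shallow_sqnorm n0 n2 \<omega>)"
      using \<epsilon>C_le
      by (rule mult_right_mono) (simp add: shallow_sqnorm_def case_prod_beta sum_nonneg add_nonneg_nonneg)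
    finally show ?thesis
      by simp
  qed
  ultimately show thesis
    using that by blast
qed

theorem proposition5p3:
  fixes n0 n2 :: nat and Cb CW M :: real and \<sigma> \<sigma>' :: "real \<Rightarrow> real"
    and A :: "'a set" and x :: "'a \<Rightarrow> nat \<Rightarrow> real" and s :: "nat \<Rightarrow> nat"
  assumes "n0 \<ge> 1" and "n2 \<ge> 1" and "Cb \<ge> 0" and "CW > 0"
    and "finite A"
    and "\<forall>h\<in>{1..n2}. s h \<in> {0, 1}"
    and "\<sigma> \<in> borel_measurable borel" and "\<sigma>' \<in> borel_measurable borel"
    and "(\<exists>h\<in>{1..n2}. s h = 1) \<Longrightarrow> AE t in lborel. (\<sigma> has_real_derivative \<sigma>' t) (at t)"
    and "M > 0"
    and "\<forall>\<alpha>\<in>A. \<forall>b (w :: nat \<Rightarrow> real). \<forall>h\<in>{1..n2}.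
           \<bar>sigma_s \<sigma> \<sigma>' (s h) (b + (\<Sum>r=1..n0. w r * x \<alpha> r)) * (w 1) ^ (s h)\<bar>
             \<le> M * (1 + \<bar>b + (\<Sum>r=1..n0. w r * x \<alpha> r)\<bar>)"
  shows "\<exists>\<epsilon>>0. \<forall>\<theta> :: 'a \<Rightarrow> nat \<Rightarrow> real.
           (\<forall>\<alpha>\<in>A. \<forall>h\<in>{1..n2}. \<bar>\<theta> \<alpha> h\<bar> < \<epsilon>) \<longrightarrow>
           (\<integral>\<^sup>+ \<omega>. ennreal (exp (\<Sum>\<alpha>\<in>A. \<Sum>h=1..n2.
               \<theta> \<alpha> h * shallow_F n0 Cb CW \<sigma> \<sigma>' s h (x \<alpha>) \<omega>)) \<partial>shallow_space n0 n2) < \<infinity>"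
proof -
  obtain \<epsilon> where "\<epsilon> > 0" and exponent_le: "\<And>\<theta> \<omega>. \<forall>\<alpha>\<in>A. \<forall>h\<in>{1..n2}. \<bar>\<theta> \<alpha> h\<bar> < \<epsilon> \<Longrightarrow>
      (\<Sum>\<alpha>\<in>A. \<Sum>h=1..n2. \<theta> \<alpha> h * shallow_F n0 Cb CW \<sigma> \<sigma>' s h (x \<alpha>) \<omega>)
        \<le> (1 + shallow_sqnorm n0 n2 \<omega>) / 4"
    using shallow_exponent_le_quarter[OF assms(3) less_imp_le[OF assms(4)] less_imp_le[OF assms(10)] assms(11)]
    by blast
  show ?thesis
  proof (intro exI[of _ \<epsilon>] conjI allI impI \<open>\<epsilon> > 0\<close>)
    fix \<theta> :: "'a \<Rightarrow> nat \<Rightarrow> real"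
    assume "\<forall>\<alpha>\<in>A. \<forall>h\<in>{1..n2}. \<bar>\<theta> \<alpha> h\<bar> < \<epsilon>"
    then have "(\<integral>\<^sup>+ \<omega>. ennreal (exp (\<Sum>\<alpha>\<in>A. \<Sum>h=1..n2.
               \<theta> \<alpha> h * shallow_F n0 Cb CW \<sigma> \<sigma>' s h (x \<alpha>) \<omega>)) \<partial>shallow_space n0 n2)
        \<le> (\<integral>\<^sup>+ \<omega>. ennreal (exp (1 / 4)) * ennreal (exp (shallow_sqnorm n0 n2 \<omega> / 4)) \<partial>shallow_space n0 n2)"
      using exponent_le
      by (intro nn_integral_mono) (simp add: add_divide_distrib exp_add[symmetric] ennreal_mult[symmetric])
    also have "\<dots> = ennreal (exp (1 / 4)) * ennreal (sqrt 2) ^ (1 + n0 + n2)"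
      using borel_measurable_shallow_sqnorm
      by (simp add: nn_integral_cmult nn_integral_shallow_space_exp_quarter_sqnorm)
    also have "\<dots> < \<infinity>"
      by (simp add: ennreal_mult_less_top power_less_top_ennreal)
    finally show "(\<integral>\<^sup>+ \<omega>. ennreal (exp (\<Sum>\<alpha>\<in>A. \<Sum>h=1..n2.
               \<theta> \<alpha> h * shallow_F n0 Cb CW \<sigma> \<sigma>' s h (x \<alpha>) \<omega>)) \<partial>shallow_space n0 n2) < \<infinity>" .
  qed
qed

end
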